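(* In the setting below, suppose $\eta \geq \eta_0$ and $t < \tau$. Then there is an integer $s$ with $t \le s \leq t + 1 + 4n/\gamma + 96/\gamma^2$ such that either $s = \tau$ or an oscillation happens at iteration $s$.
   Context: Dimension $d=2$. Data $x_1,\dots,x_n\in\mathbb{R}^2$ with $\|x_i\|\le 1$, linearly separable (some $w$ has $\langle w,x_i\rangle>0$ for all $i$). $F(w) = \frac{1}{n}\sum_{i=1}^n \log(1+\exp(-\langle w, x_i\rangle))$. Maximum margin $\gamma = \max_{\|w\|=1}\min_i \langle w, x_i\rangle$ with maximizer the unit vector $w_*$; $v_*$ is a fixed unit vector orthogonal to $w_*$. Gradient descent: $w_0=0$, $w_{t+1} = w_t - \eta\nabla F(w_t)$ with constant $\eta>0$. $\hat{w}_t = \langle w_t, w_*\rangle$, $\tilde{w}_t = \langle w_t, v_*\rangle$. $\tau = \min\{t\ge 0: F(w_t)\le 1/(8\eta)\}$. $\eta_0 = \max(n, \frac{32}{\gamma^2}\log\frac{256}{\gamma^2})$. $\lambda = \frac{1}{\gamma}\log\frac{1}{\exp(1/(8\eta))-1}$. An oscillation happens at iteration $t\ge 0$ if all of: (1) $\hat{w}_t \geq \lambda$; (2) $F(w_t) > 1/(8\eta)$ and $F(w_{t+1}) > 1/(8\eta)$; (3) $\tilde{w}_{t+1}\tilde{w}_t < 0$. *)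

theory Defs
  imports "HOL-Analysis.Analysis" "HOL-Library.Extended_Nat"
begin

definition logloss :: "nat \<Rightarrow> (nat \<Rightarrow> real^2) \<Rightarrow> real^2 \<Rightarrow> real" where
  "logloss n x w = (1 / real n) * (\<Sum>i<n. ln (1 + exp (- (w \<bullet> x i))))"

definition logloss_grad :: "nat \<Rightarrow> (nat \<Rightarrow> real^2) \<Rightarrow> real^2 \<Rightarrow> real^2" where
  "logloss_grad n x w = (1 / real n) *\<^sub>R (\<Sum>i<n. (- 1 / (1 + exp (w \<bullet> x i))) *\<^sub>R x i)"

fun gd :: "nat \<Rightarrow> (nat \<Rightarrow> real^2) \<Rightarrow> real \<Rightarrow> nat \<Rightarrow> real^2" where
  "gd n x eta 0 = 0"
| "gd n x eta (Suc t) = gd n x eta t - eta *\<^sub>R logloss_grad n x (gd n x eta t)"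

definition margin :: "nat \<Rightarrow> (nat \<Rightarrow> real^2) \<Rightarrow> real^2 \<Rightarrow> real" where
  "margin n x w = Min ((\<lambda>i. w \<bullet> x i) ` {..<n})"

definition max_margin :: "nat \<Rightarrow> (nat \<Rightarrow> real^2) \<Rightarrow> real" where
  "max_margin n x = (SUP w \<in> sphere 0 1. margin n x w)"

definition tau :: "nat \<Rightarrow> (nat \<Rightarrow> real^2) \<Rightarrow> real \<Rightarrow> enat" where
  "tau n x eta = (if \<exists>t. logloss n x (gd n x eta t) \<le> 1 / (8 * eta)
     then enat (LEAST t. logloss n x (gd n x eta t) \<le> 1 / (8 * eta)) else \<infinity>)"

definition eta0 :: "nat \<Rightarrow> real \<Rightarrow> real" where
  "eta0 n \<gamma> = max (real n) (32 / \<gamma>\<^sup>2 * ln (256 / \<gamma>\<^sup>2))"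

definition lam :: "real \<Rightarrow> real \<Rightarrow> real" where
  "lam \<gamma> eta = (1 / \<gamma>) * ln (1 / (exp (1 / (8 * eta)) - 1))"

definition oscillation :: "nat \<Rightarrow> (nat \<Rightarrow> real^2) \<Rightarrow> real \<Rightarrow> real^2 \<Rightarrow> real^2 \<Rightarrow> nat \<Rightarrow> bool" where
  "oscillation n x eta ws vs t \<longleftrightarrow>
     gd n x eta t \<bullet> ws \<ge> lam (max_margin n x) eta \<and>
     logloss n x (gd n x eta t) > 1 / (8 * eta) \<and>
     logloss n x (gd n x eta (Suc t)) > 1 / (8 * eta) \<and>
     (gd n x eta (Suc t) \<bullet> vs) * (gd n x eta t \<bullet> vs) < 0"

end

theory Submission
  imports Defs
begin

(* Write w_t = par t * w_* + perp t * v_*.  Every point has <x_i, w_*> >= gamma, so par t >= eta gamma / 2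
   from the first step on, and since eta >= eta_0 every point on the same side of w_* as w_t
   (b_i * perp t >= 0) has margin >= eta gamma^2 / 2, hence weight and loss at most
   delta = exp (- eta gamma^2 / 2), which is negligible.  So while F(w_t) > 1/(8 eta) some point on
   the other side has margin below ln (8 eta) <= eta gamma^2 / 4: this forces perp t <> 0, keeps
   |perp t| <= eta, and makes condition (1) of an oscillation automatic, as lambda <= eta gamma / 4.

   Suppose perp keeps its sign, say positive (v_* -> - v_* swaps the cases), for K steps before tau.
   While some margin is nonpositive, par grows by eta gamma / (2n) per step and perp^2 shrinks by
   that amount times par; as perp^2 <= eta^2 this phase lasts fewer than 2 + 3n/gamma steps.  Once
   all margins are positive they stay so and 1/F grows by eta gamma^2 / 5 per step; as 1/F < 8 eta,
   this phase lasts fewer than 40/gamma^2 steps.  Hence within 4n/gamma + 96/gamma^2 steps either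
   tau is reached or perp changes sign, which is an oscillation. *)

section \<open>The logistic loss\<close>

definition logistic_loss :: "real \<Rightarrow> real" where
  "logistic_loss z = ln (1 + exp (- z))"

definition logistic_weight :: "real \<Rightarrow> real" where
  "logistic_weight z = 1 / (1 + exp z)"

lemma logistic_weight_pos: "0 < logistic_weight z"
  by (simp add: logistic_weight_def add_pos_pos)

lemma logistic_weight_le_1: "logistic_weight z \<le> 1"
  by (simp add: logistic_weight_def add_pos_pos)

lemma logistic_weight_antimono: "z \<le> z' \<Longrightarrow> logistic_weight z' \<le> logistic_weight z"
  by (simp add: logistic_weight_def add_pos_pos frac_le)

lemma logistic_weight_le_exp: "logistic_weight z \<le> exp (- z)"
proof -
  have "1 / (1 + exp z) \<le> 1 / exp z"
    by (intro frac_le) auto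
  then show ?thesis
    by (simp add: logistic_weight_def exp_minus divide_inverse)
qed

lemma logistic_weight_ge_half_exp: "0 \<le> z \<Longrightarrow> exp (- z) / 2 \<le> logistic_weight z"
proof -
  assume "0 \<le> z"
  then have "1 + exp z \<le> 2 * exp z"
    by simp
  then show ?thesis
    by (simp add: logistic_weight_def exp_minus field_simps add_pos_pos)
qed

lemma logistic_weight_ge_half: "z \<le> 0 \<Longrightarrow> 1 / 2 \<le> logistic_weight z"
  by (simp add: logistic_weight_def field_simps add_pos_pos)

lemma logistic_loss_le_exp: "logistic_loss z \<le> exp (- z)"
  unfolding logistic_loss_def by (rule ln_add_one_self_le_self) simp

lemma logistic_loss_has_real_derivative:
  "(logistic_loss has_real_derivative - logistic_weight z) (at z)"
proof -
  have "(logistic_loss has_real_derivative 1 / (1 + exp (- z)) * (exp (- z) * - 1)) (at z)"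
    unfolding logistic_loss_def[abs_def]
    by (auto intro!: derivative_eq_intros simp: add_pos_pos)
  moreover have "1 / (1 + exp (- z)) * (exp (- z) * - 1) = - logistic_weight z"
    by (simp add: logistic_weight_def exp_minus field_simps add_pos_pos)
  ultimately show ?thesis
    by simp
qed

lemma logistic_loss_tangent:
  "logistic_loss z' \<le> logistic_loss z - (z' - z) * logistic_weight z'"
proof (cases z z' rule: linorder_cases)
  case less
  then obtain \<xi> where "\<xi> < z'"
    and mvt: "logistic_loss z' - logistic_loss z = (z' - z) * - logistic_weight \<xi>"
    using MVT2[OF less, of logistic_loss "\<lambda>z. - logistic_weight z"]
      logistic_loss_has_real_derivative by blast
  have "(z' - z) * logistic_weight z' \<le> (z' - z) * logistic_weight \<xi>"
    using less \<open>\<xi> < z'\<close> by (intro mult_left_mono logistic_weight_antimono) auto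
  with mvt show ?thesis
    by simp
next
  case greater
  then obtain \<xi> where "z' < \<xi>"
    and mvt: "logistic_loss z - logistic_loss z' = (z - z') * - logistic_weight \<xi>"
    using MVT2[OF greater, of logistic_loss "\<lambda>z. - logistic_weight z"]
      logistic_loss_has_real_derivative by blast
  have "(z - z') * logistic_weight \<xi> \<le> (z - z') * logistic_weight z'"
    using greater \<open>z' < \<xi>\<close> by (intro mult_left_mono logistic_weight_antimono) auto
  with mvt show ?thesis
    by (simp add: algebra_simps)
qed simp

lemma logloss_eq: "logloss n x w = (\<Sum>i<n. logistic_loss (w \<bullet> x i)) / real n"
  by (simp add: logloss_def logistic_loss_def)

lemma gd_Suc_inner:
  "gd n x eta (Suc s) \<bullet> v =
     gd n x eta s \<bullet> v + eta / real n * (\<Sum>i<n. logistic_weight (gd n x eta s \<bullet> x i) * (x i \<bullet> v))"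
  by (simp add: logloss_grad_def logistic_weight_def inner_add_left inner_diff_left inner_sum_left
      sum_negf sum_divide_distrib)

lemma orthonormal_pair_expansion:
  fixes v e1 e2 :: "'a::euclidean_space"
  assumes dim2: "DIM('a) = 2" and e1: "norm e1 = 1" and e2: "norm e2 = 1" and orth: "e1 \<bullet> e2 = 0"
  shows "v = (v \<bullet> e1) *\<^sub>R e1 + (v \<bullet> e2) *\<^sub>R e2"
proof -
  have ne: "e1 \<noteq> e2"
    using e1 orth by (auto simp: norm_eq_1)
  have po: "pairwise orthogonal {e1, e2}"
    using orth by (auto simp: pairwise_def orthogonal_def inner_commute)
  have "independent {e1, e2}"
    using e1 e2 by (intro pairwise_orthogonal_independent[OF po]) auto
  then have "span {e1, e2} = UNIV"
    using ne dim2 by (metis dim_eq_card_independent dim_eq_full card_2_iff)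
  then have "(\<Sum>e\<in>{e1, e2}. (v \<bullet> e) *\<^sub>R e) = v"
    using po e1 e2 by (intro orthonormal_basis_expand) auto
  then show ?thesis
    using ne by simp
qed

lemma quarter_square_le_exp: "0 \<le> (t::real) \<Longrightarrow> t\<^sup>2 / 4 \<le> exp t"
proof -
  assume t: "0 \<le> t"
  have "t / 2 \<le> exp (t / 2)"
    using exp_ge_add_one_self[of "t / 2"] by linarith
  then have "(t / 2)\<^sup>2 \<le> (exp (t / 2))\<^sup>2"
    using t by (intro power_mono) auto
  also have "(exp (t / 2))\<^sup>2 = exp t"
    by (simp add: power2_eq_square exp_add[symmetric])
  finally show ?thesis
    by (simp add: power_divide)
qed

lemma square_div_mul_exp_neg_half_le:
  fixes u g :: real
  assumes u: "0 < u" and g: "0 < g" "g \<le> 1" and ug: "32 * ln (256 / g) \<le> u"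
  shows "(u / g)\<^sup>2 * exp (- u / 2) \<le> g / 262144"
proof -
  have "0 < ln (256 / g)"
    using g by (intro ln_gt_zero) (simp add: field_simps)
  then have "exp (3 * ln (256 / g)) \<le> exp (u / 4)"
    using ug by simp
  moreover have "exp (3 * ln (256 / g)) = (256 / g) ^ 3"
    using g exp_of_nat_mult[of 3 "ln (256 / g)"] by simp
  ultimately have "(u\<^sup>2 / 64) * (256 / g) ^ 3 \<le> exp (u / 4) * exp (u / 4)"
    using quarter_square_le_exp[of "u / 4"] u g by (intro mult_mono) (auto simp: power_divide)
  also have "\<dots> = exp (u / 2)"
    by (simp add: exp_add[symmetric])
  finally have bound: "(u\<^sup>2 / 64) * (256 / g) ^ 3 \<le> exp (u / 2)" .
  have "(u / g)\<^sup>2 * exp (- u / 2) = (u / g)\<^sup>2 / exp (u / 2)"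
    by (simp add: exp_minus inverse_eq_divide)
  also have "\<dots> \<le> (u / g)\<^sup>2 / ((u\<^sup>2 / 64) * (256 / g) ^ 3)"
    using bound u g by (intro divide_left_mono) auto
  also have "\<dots> = g / 262144"
    using u g(1) by (simp add: power_divide power2_eq_square power3_eq_cube)
  finally show ?thesis .
qed

(* Phase-1 accounting: step j removes at least j c^2 from perp^2, where c = e g / (2N), so k steps
   remove c^2 k (k - 1) / 2 from a budget of e^2 plus k errors of size e eps. *)
lemma triangular_budget_bound:
  fixes k e g N \<epsilon> :: real
  assumes e: "1 \<le> e" and g: "0 < g" "g \<le> 1" and N: "1 \<le> N"
    and \<epsilon>: "0 \<le> \<epsilon>" "N * \<epsilon> \<le> g\<^sup>2 / 262144"
    and budget: "(e * g / (2 * N))\<^sup>2 * (k * (k - 1) / 2) \<le> e\<^sup>2 + k * e * \<epsilon>"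
  shows "k < 2 + 3 * N / g"
proof (rule ccontr)
  assume "\<not> ?thesis"
  then have "2 * g + 3 * N \<le> g * k"
    using g by (simp add: field_simps)
  then have gk: "3 * N \<le> g * k" "3 * N \<le> g * (k - 1)"
    using g N by (auto simp: algebra_simps)
  then have "0 < g * k"
    using N by linarith
  then have k: "0 < k"
    using g by (simp add: zero_less_mult_iff)
  have "3 * (e\<^sup>2 * (g * k)) * (3 * N) \<le> 3 * (e\<^sup>2 * (g * k)) * (g * (k - 1))"
    using gk k g by (intro mult_left_mono) auto
  then have "9 * e\<^sup>2 * (g * k) \<le> 3 * (e\<^sup>2 * (g * k)) * (g * (k - 1)) / N"
    using N by (simp add: field_simps)
  also have "\<dots> = 24 * N * ((e * g / (2 * N))\<^sup>2 * (k * (k - 1) / 2))"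
    using N by (simp add: field_simps power2_eq_square)
  finally have lhs: "9 * e\<^sup>2 * (g * k) \<le> 24 * N * ((e * g / (2 * N))\<^sup>2 * (k * (k - 1) / 2))" .
  have "g\<^sup>2 \<le> g" "g \<le> e * g"
    using g e by (simp_all add: power2_eq_square mult_le_cancel_left1)
  then have "24 * N * \<epsilon> < e * g"
    using \<epsilon> g by linarith
  then have "k * e * (24 * N * \<epsilon>) < k * e * (e * g)"
    using k e by (intro mult_strict_left_mono) auto
  then have small: "24 * N * (k * e * \<epsilon>) < e\<^sup>2 * (g * k)"
    by (simp add: power2_eq_square mult_ac)
  have "24 * N * ((e * g / (2 * N))\<^sup>2 * (k * (k - 1) / 2)) \<le> 24 * N * (e\<^sup>2 + k * e * \<epsilon>)"
    using budget N by (intro mult_left_mono) auto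
  then have "9 * e\<^sup>2 * (g * k) \<le> 24 * N * e\<^sup>2 + 24 * N * (k * e * \<epsilon>)"
    unfolding distrib_left by (rule order_trans[OF lhs])
  also have "\<dots> < 8 * e\<^sup>2 * (g * k) + e\<^sup>2 * (g * k)"
    using gk e small by (intro add_le_less_mono) (simp_all add: mult_left_mono)
  finally show False
    by linarith
qed

lemma product_margin_lower_bound:
  fixes F F' e G \<delta> :: real
  assumes e: "1 \<le> e" and G: "0 < G" "G \<le> 1" and \<delta>: "0 < \<delta>" "e\<^sup>2 * \<delta> \<le> G / 262144"
    and F: "1 / (8 * e) < F" and F': "1 / (8 * e) < F'"
  shows "G * (F * F') / 5 \<le> G * ((F / 2 - \<delta>) * (F' / 2 - \<delta>)) - \<delta>"
proof -
  have "0 < 1 / (8 * e)"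
    using e by simp
  then have pos: "0 < F" "0 < F'"
    using F F' by linarith+
  have "e * \<delta> \<le> e\<^sup>2 * \<delta>"
    using e \<delta> by (simp add: power2_eq_square)
  then have "e * \<delta> \<le> 1 / 262144"
    using \<delta> G by linarith
  moreover have "1 / 8 < e * F" "1 / 8 < e * F'"
    using F F' e by (simp_all add: field_simps)
  ultimately have "e * (32768 * \<delta>) < e * F" "e * (32768 * \<delta>) < e * F'"
    by linarith+
  then have "\<delta> \<le> F / 40" "\<delta> \<le> F' / 40"
    using e \<delta> by (simp_all add: mult_less_cancel_left_pos)
  then have "(19 / 40 * F) * (19 / 40 * F') \<le> (F / 2 - \<delta>) * (F' / 2 - \<delta>)"
    using pos by (intro mult_mono) auto
  moreover have "(19 / 40 * F) * (19 / 40 * F') = 361 / 1600 * (F * F')"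
    by simp
  ultimately have quad: "9 / 40 * (F * F') \<le> (F / 2 - \<delta>) * (F' / 2 - \<delta>)"
    using mult_pos_pos[OF pos] by linarith
  have "1 / (8 * e) * (1 / (8 * e)) \<le> F * F'"
    using F F' e pos by (intro mult_mono) auto
  then have "G / 40 * (1 / (64 * e\<^sup>2)) \<le> G / 40 * (F * F')"
    using G by (intro mult_left_mono) (auto simp: power2_eq_square)
  moreover have "\<delta> * (e\<^sup>2 * 2560) \<le> \<delta> * (e\<^sup>2 * 262144)"
    by (rule mult_left_mono) (use \<delta> in auto)
  then have "\<delta> * (e\<^sup>2 * 2560) \<le> G"
    by (rule order_trans) (use \<delta> in \<open>simp add: field_simps\<close>)
  then have "\<delta> \<le> G / 40 * (1 / (64 * e\<^sup>2))"
    using e by (simp add: field_simps)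
  moreover have "G * (9 / 40 * (F * F')) \<le> G * ((F / 2 - \<delta>) * (F' / 2 - \<delta>))"
    using quad G by (intro mult_left_mono) auto
  ultimately show ?thesis
    by simp
qed

lemma inverse_increase_of_quadratic_decrease:
  fixes F F' e G \<delta> :: real
  assumes e: "1 \<le> e" and G: "0 < G" "G \<le> 1" and \<delta>: "0 < \<delta>" "e\<^sup>2 * \<delta> \<le> G / 262144"
    and F: "1 / (8 * e) < F" and F': "1 / (8 * e) < F'"
    and decrease: "F' \<le> F - e * (G * ((F / 2 - \<delta>) * (F' / 2 - \<delta>)) - \<delta>)"
  shows "1 / F + e * G / 5 \<le> 1 / F'"
proof -
  have "0 < 1 / (8 * e)"
    using e by simp
  then have pos: "0 < F" "0 < F'"
    using F F' by linarith+
  have "e * (G * (F * F') / 5) \<le> e * (G * ((F / 2 - \<delta>) * (F' / 2 - \<delta>)) - \<delta>)"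
    using product_margin_lower_bound[OF e G \<delta> F F'] e by (intro mult_left_mono) auto
  then have "e * (G * (F * F') / 5) \<le> F - F'"
    using decrease by linarith
  then have "e * (G * (F * F') / 5) / (F * F') \<le> (F - F') / (F * F')"
    using pos by (intro divide_right_mono) auto
  moreover have "e * (G * (F * F') / 5) / (F * F') = e * G / 5"
    using pos by simp
  moreover have "(F - F') / (F * F') = 1 / F' - 1 / F"
    using pos by (simp add: diff_divide_distrib)
  ultimately show ?thesis
    by linarith
qed

lemma enat_less_until:
  assumes "t \<le> s" "enat t < T" "\<And>r. t < r \<Longrightarrow> r \<le> s \<Longrightarrow> enat r \<noteq> T"
  shows "enat s < T"
  using assms(1)
proof (induction rule: dec_induct)
  case (step r)
  then have "enat (Suc r) \<le> T"
    by (simp add: Suc_ile_eq)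
  with step assms(3)[of "Suc r"] show ?case
    by auto
qed (use assms(2) in simp)

lemma pos_of_pos_products:
  fixes f :: "nat \<Rightarrow> 'a::linordered_idom"
  assumes "0 < f s0" "\<forall>k<K. 0 < f (s0 + Suc k) * f (s0 + k)"
  shows "k \<le> K \<Longrightarrow> 0 < f (s0 + k)"
proof (induction k)
  case (Suc k)
  then have "0 < f (s0 + k)" "0 < f (s0 + Suc k) * f (s0 + k)"
    using assms(2) by auto
  then show ?case
    by (simp add: zero_less_mult_iff)
qed (use assms(1) in simp)

section \<open>Gradient descent on separable data in the plane\<close>

locale separable_logistic_gd =
  fixes n :: nat and x :: "nat \<Rightarrow> real^2" and eta :: real and ws vs :: "real^2"
  assumes n_pos: "n \<ge> 1"
    and bounded: "\<forall>i<n. norm (x i) \<le> 1"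
    and separable: "\<exists>w. \<forall>i<n. w \<bullet> x i > 0"
    and ws_unit: "norm ws = 1"
    and ws_max: "margin n x ws = max_margin n x"
    and vs_unit: "norm vs = 1"
    and vs_orth: "vs \<bullet> ws = 0"
    and eta_pos: "eta > 0"
    and eta_ge: "eta \<ge> eta0 n (max_margin n x)"
begin

definition "\<gamma> = max_margin n x"
definition "a i = x i \<bullet> ws"
definition "b i = x i \<bullet> vs"
definition "par s = gd n x eta s \<bullet> ws"
definition "perp s = gd n x eta s \<bullet> vs"
definition "marg s i = gd n x eta s \<bullet> x i"
definition "loss s = logloss n x (gd n x eta s)"
definition "u = eta * \<gamma>\<^sup>2"
definition "\<delta> = exp (- u / 2)"

lemma x_expansion: "x i = a i *\<^sub>R ws + b i *\<^sub>R vs"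
  unfolding a_def b_def
  by (intro orthonormal_pair_expansion ws_unit vs_unit) (simp_all add: inner_commute vs_orth)

lemma marg_eq: "marg s i = par s * a i + perp s * b i"
proof -
  have "marg s i = gd n x eta s \<bullet> (a i *\<^sub>R ws + b i *\<^sub>R vs)"
    unfolding marg_def by (subst x_expansion) (rule refl)
  then show ?thesis
    by (simp add: inner_add_right par_def perp_def)
qed

lemma inner_x_eq: "x i \<bullet> x j = a i * a j + b i * b j"
proof -
  have "x i \<bullet> x j = x i \<bullet> (a j *\<^sub>R ws + b j *\<^sub>R vs)"
    by (subst (2) x_expansion) (rule refl)
  then show ?thesis
    by (simp add: inner_add_right a_def b_def)
qed

lemma abs_inner_x_le_1: "i < n \<Longrightarrow> j < n \<Longrightarrow> \<bar>x i \<bullet> x j\<bar> \<le> 1"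
  using Cauchy_Schwarz_ineq2[of "x i" "x j"] bounded mult_mono[of "norm (x i)" 1 "norm (x j)" 1]
  by force

lemma abs_b_le_1: "i < n \<Longrightarrow> \<bar>b i\<bar> \<le> 1"
  using Cauchy_Schwarz_ineq2[of "x i" vs] bounded vs_unit by (force simp: b_def)

lemma margin_le_1: "norm v = 1 \<Longrightarrow> margin n x v \<le> 1"
proof -
  assume v: "norm v = 1"
  have "margin n x v \<le> v \<bullet> x 0"
    unfolding margin_def using n_pos by (intro Min_le) auto
  also have "\<dots> \<le> norm v * norm (x 0)"
    by (rule norm_cauchy_schwarz)
  also have "\<dots> \<le> 1"
    using v bounded n_pos by auto
  finally show ?thesis .
qed

lemma gamma_le_a: "i < n \<Longrightarrow> \<gamma> \<le> a i"
  using ws_max n_pos unfolding \<gamma>_def margin_def a_def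
  by (metis (no_types, lifting) Min_le finite_imageI finite_lessThan image_eqI inner_commute lessThan_iff)

lemma gamma_le_1: "\<gamma> \<le> 1"
  using margin_le_1[OF ws_unit] ws_max by (simp add: \<gamma>_def)

lemma gamma_pos: "0 < \<gamma>"
proof -
  obtain w where w: "\<forall>i<n. w \<bullet> x i > 0"
    using separable by blast
  then have "w \<noteq> 0"
    using n_pos by (metis inner_zero_left less_irrefl less_le_trans zero_less_one)
  define w' where "w' = w /\<^sub>R norm w"
  have "0 < margin n x w'"
    unfolding margin_def using w \<open>w \<noteq> 0\<close> n_pos by (subst Min_gr_iff) (auto simp: w'_def lessThan_empty_iff)
  also have "margin n x w' \<le> max_margin n x"
    unfolding max_margin_def
  proof (rule cSUP_upper)
    show "w' \<in> sphere 0 1"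
      using \<open>w \<noteq> 0\<close> by (simp add: w'_def)
    show "bdd_above (margin n x ` sphere 0 1)"
      by (rule bdd_aboveI[of _ 1]) (auto intro: margin_le_1)
  qed
  finally show ?thesis
    by (simp add: \<gamma>_def)
qed

lemma a_pos: "i < n \<Longrightarrow> 0 < a i"
  using gamma_le_a gamma_pos by (meson less_le_trans)

lemma par_Suc: "par (Suc s) = par s + eta / real n * (\<Sum>i<n. logistic_weight (marg s i) * a i)"
  unfolding par_def marg_def a_def by (rule gd_Suc_inner)

lemma perp_Suc: "perp (Suc s) = perp s + eta / real n * (\<Sum>i<n. logistic_weight (marg s i) * b i)"
  unfolding perp_def marg_def b_def by (rule gd_Suc_inner)

lemma marg_Suc:
  "marg (Suc s) i = marg s i + eta / real n * (\<Sum>j<n. logistic_weight (marg s j) * (x j \<bullet> x i))"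
  unfolding marg_def by (rule gd_Suc_inner)

lemma loss_eq: "loss s = (\<Sum>i<n. logistic_loss (marg s i)) / real n"
  by (simp add: loss_def marg_def logloss_eq)

lemma par_le_par_Suc: "par s \<le> par (Suc s)"
proof -
  have "0 \<le> (\<Sum>i<n. logistic_weight (marg s i) * a i)"
    using logistic_weight_pos a_pos by (intro sum_nonneg) (auto intro: mult_nonneg_nonneg less_imp_le)
  then show ?thesis
    using eta_pos by (simp add: par_Suc)
qed

lemma par_one_ge: "eta * \<gamma> / 2 \<le> par 1"
proof -
  have "of_nat (card {..<n}) * (\<gamma> / 2) \<le> (\<Sum>i<n. logistic_weight (marg 0 i) * a i)"
    using gamma_le_a by (intro sum_bounded_below) (simp add: marg_def logistic_weight_def)
  then have "eta / real n * (real n * (\<gamma> / 2)) \<le> eta / real n * (\<Sum>i<n. logistic_weight (marg 0 i) * a i)"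
    using eta_pos by (intro mult_left_mono) auto
  then show ?thesis
    using n_pos par_Suc[of 0] by (simp add: par_def)
qed

lemma par_ge: "1 \<le> s \<Longrightarrow> eta * \<gamma> / 2 \<le> par s"
  by (induction rule: dec_induct) (use par_one_ge par_le_par_Suc order_trans in blast)+

lemma n_le_eta: "real n \<le> eta"
  using eta_ge by (simp add: eta0_def)

lemma one_le_eta: "1 \<le> eta"
  using n_le_eta n_pos by simp

lemma gamma_sq_pos: "0 < \<gamma>\<^sup>2"
  using gamma_pos by simp

lemma gamma_sq_le_1: "\<gamma>\<^sup>2 \<le> 1"
  using gamma_pos gamma_le_1 by (simp add: power_le_one)

lemma u_pos: "0 < u"
  using eta_pos gamma_sq_pos by (simp add: u_def)

lemma delta_pos: "0 < \<delta>"
  by (simp add: \<delta>_def)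

lemma u_ge: "32 * ln (256 / \<gamma>\<^sup>2) \<le> u"
proof -
  have "32 / \<gamma>\<^sup>2 * ln (256 / \<gamma>\<^sup>2) * \<gamma>\<^sup>2 \<le> eta * \<gamma>\<^sup>2"
    using eta_ge gamma_sq_pos by (intro mult_right_mono) (auto simp: eta0_def \<gamma>_def)
  then show ?thesis
    using gamma_sq_pos by (simp add: u_def)
qed

lemma ln_8eta_le: "ln (8 * eta) \<le> u / 4"
proof -
  have "8 * eta = (u / 32) * (256 / \<gamma>\<^sup>2)"
    using gamma_sq_pos by (simp add: u_def field_simps)
  then have "ln (8 * eta) = ln (u / 32) + ln (256 / \<gamma>\<^sup>2)"
    using u_pos gamma_sq_pos by (subst ln_mult_pos[symmetric]) auto
  moreover have "ln (u / 32) \<le> u / 32 - 1"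
    using u_pos by (intro ln_le_minus_one) simp
  ultimately show ?thesis
    using u_ge u_pos by simp
qed

lemma eta_sq_delta_le: "eta\<^sup>2 * \<delta> \<le> \<gamma>\<^sup>2 / 262144"
proof -
  have "eta\<^sup>2 * \<delta> = (u / \<gamma>\<^sup>2)\<^sup>2 * exp (- u / 2)"
    using gamma_pos by (simp add: u_def \<delta>_def)
  also have "\<dots> \<le> \<gamma>\<^sup>2 / 262144"
    by (rule square_div_mul_exp_neg_half_le[OF u_pos gamma_sq_pos gamma_sq_le_1 u_ge])
  finally show ?thesis .
qed

lemma n_eta_delta_le: "real n * (eta * \<delta>) \<le> \<gamma>\<^sup>2 / 262144"
proof -
  have "real n * (eta * \<delta>) \<le> eta * (eta * \<delta>)"
    using n_le_eta delta_pos eta_pos by (intro mult_right_mono) auto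
  then show ?thesis
    using eta_sq_delta_le by (simp add: power2_eq_square mult.assoc)
qed

lemma eta_delta_le: "eta * \<delta> \<le> \<gamma>\<^sup>2 / 262144"
proof -
  have "1 * (eta * \<delta>) \<le> real n * (eta * \<delta>)"
    using n_pos eta_pos delta_pos by (intro mult_right_mono) auto
  then show ?thesis
    using n_eta_delta_le by simp
qed

lemma lam_le: "lam \<gamma> eta \<le> eta * \<gamma> / 4"
proof -
  define y where "y = 1 / (8 * eta)"
  have "1 + y \<le> exp y"
    by (rule exp_ge_add_one_self)
  moreover have "0 < y"
    using eta_pos by (simp add: y_def)
  ultimately have y: "0 < y" "y \<le> exp y - 1"
    by linarith+
  then have "ln (1 / (exp y - 1)) \<le> ln (1 / y)"
    by (subst ln_le_cancel_iff) (auto intro: divide_left_mono)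
  also have "\<dots> \<le> u / 4"
    using ln_8eta_le by (simp add: y_def)
  finally have "ln (1 / (exp y - 1)) / \<gamma> \<le> (u / 4) / \<gamma>"
    using gamma_pos by (intro divide_right_mono) auto
  then show ?thesis
    using gamma_pos by (simp add: lam_def y_def u_def power2_eq_square)
qed

lemma exists_small_marg:
  assumes "1 / (8 * eta) < loss s"
  shows "\<exists>i<n. marg s i < ln (8 * eta)"
proof (rule ccontr)
  assume none: "\<not> ?thesis"
  have "logistic_loss (marg s i) \<le> 1 / (8 * eta)" if "i \<in> {..<n}" for i
  proof -
    have "ln (8 * eta) \<le> marg s i"
      using none that by (meson lessThan_iff not_le)
    have "logistic_loss (marg s i) \<le> exp (- marg s i)"
      by (rule logistic_loss_le_exp)
    also have "\<dots> \<le> exp (- ln (8 * eta))"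
      using \<open>ln (8 * eta) \<le> marg s i\<close> by simp
    also have "\<dots> = 1 / (8 * eta)"
      using eta_pos by (simp add: exp_minus inverse_eq_divide)
    finally show ?thesis .
  qed
  then have "(\<Sum>i<n. logistic_loss (marg s i)) \<le> of_nat (card {..<n}) * (1 / (8 * eta))"
    by (rule sum_bounded_above)
  then show False
    using assms n_pos by (simp add: loss_eq field_simps)
qed

lemma logistic_weight_gt_of_small: "r < ln (8 * eta) \<Longrightarrow> 1 / (9 * eta) < logistic_weight r"
proof -
  assume "r < ln (8 * eta)"
  then have "exp r < 8 * eta"
    using eta_pos by (metis exp_less_cancel_iff exp_ln mult_pos_pos zero_less_numeral)
  then have "1 + exp r < 9 * eta"
    using one_le_eta by simp
  then show ?thesis
    unfolding logistic_weight_def by (intro frac_less2) (auto simp: add_pos_pos)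
qed

lemma par_a_ge:
  assumes "1 \<le> s" "i < n"
  shows "u / 2 \<le> par s * a i"
proof -
  have "0 \<le> eta * \<gamma> / 2"
    using eta_pos gamma_pos by simp
  then have "eta * \<gamma> / 2 * \<gamma> \<le> par s * a i"
    using par_ge[OF assms(1)] gamma_le_a[OF assms(2)] gamma_pos by (intro mult_mono) auto
  then show ?thesis
    by (simp add: u_def power2_eq_square)
qed

lemma marg_ge_of_same_side: "1 \<le> s \<Longrightarrow> 0 \<le> perp s \<Longrightarrow> i < n \<Longrightarrow> 0 \<le> b i \<Longrightarrow> u / 2 \<le> marg s i"
  using par_a_ge[of s i] marg_eq[of s i] by (simp add: add_increasing2)

lemma weight_le_delta_of_same_side:
  "1 \<le> s \<Longrightarrow> 0 \<le> perp s \<Longrightarrow> i < n \<Longrightarrow> 0 \<le> b i \<Longrightarrow> logistic_weight (marg s i) \<le> \<delta>"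
  using logistic_weight_le_exp[of "marg s i"] marg_ge_of_same_side[of s i]
  by (simp add: \<delta>_def order_trans)

lemma loss_le_delta_of_same_side:
  "1 \<le> s \<Longrightarrow> 0 \<le> perp s \<Longrightarrow> i < n \<Longrightarrow> 0 \<le> b i \<Longrightarrow> logistic_loss (marg s i) \<le> \<delta>"
  using logistic_loss_le_exp[of "marg s i"] marg_ge_of_same_side[of s i]
  by (simp add: \<delta>_def order_trans)

lemma exists_violator:
  assumes "1 \<le> s" "1 / (8 * eta) < loss s" "0 < perp s"
  shows "\<exists>k<n. b k < 0 \<and> u / 4 < - b k * perp s \<and> 1 / (9 * eta) < logistic_weight (marg s k)"
proof -
  obtain k where k: "k < n" "marg s k < ln (8 * eta)"
    using exists_small_marg[OF assms(2)] by blast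
  then have "perp s * b k < - u / 4"
    using ln_8eta_le par_a_ge[OF assms(1) k(1)] marg_eq[of s k] by linarith
  moreover have "perp s * b k < 0"
    using calculation u_pos by linarith
  then have "b k < 0"
    using assms(3) by (simp add: mult_less_0_iff)
  ultimately show ?thesis
    using k logistic_weight_gt_of_small by (auto simp: algebra_simps)
qed

lemma perp_nonzero: "1 \<le> s \<Longrightarrow> 1 / (8 * eta) < loss s \<Longrightarrow> perp s \<noteq> 0"
  using exists_small_marg[of s] ln_8eta_le par_a_ge[of s] marg_eq[of s] u_pos by force

lemma perp_Suc_ge: "perp s - eta \<le> perp (Suc s)"
proof -
  have "- 1 \<le> logistic_weight (marg s j) * b j" if "j \<in> {..<n}" for j
  proof -
    have "\<bar>logistic_weight (marg s j)\<bar> * \<bar>b j\<bar> \<le> 1 * 1"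
      using that abs_b_le_1[of j] logistic_weight_le_1[of "marg s j"] logistic_weight_pos[of "marg s j"]
      by (intro mult_mono) auto
    then show ?thesis
      by (simp add: abs_le_iff abs_mult[symmetric])
  qed
  then have "of_nat (card {..<n}) * - 1 \<le> (\<Sum>j<n. logistic_weight (marg s j) * b j)"
    by (rule sum_bounded_below)
  then have "eta / real n * (real n * - 1) \<le> eta / real n * (\<Sum>j<n. logistic_weight (marg s j) * b j)"
    using eta_pos by (intro mult_left_mono) auto
  then show ?thesis
    using n_pos by (simp add: perp_Suc)
qed

lemma perp_Suc_le:
  assumes "1 \<le> s" "0 \<le> perp s" "k < n" "b k < 0"
  shows "perp (Suc s) \<le> perp s + eta / real n * (b k * logistic_weight (marg s k)) + eta * \<delta>"
proof -
  have "logistic_weight (marg s j) * b j \<le> (if j = k then b k * logistic_weight (marg s k) else 0) + \<delta>"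
    if "j \<in> {..<n}" for j
  proof (cases "0 < b j")
    case True
    then have "logistic_weight (marg s j) * b j \<le> \<delta> * 1"
      using that assms(1,2) abs_b_le_1[of j] logistic_weight_pos[of "marg s j"] delta_pos
      by (intro mult_mono weight_le_delta_of_same_side) auto
    then show ?thesis
      using True assms(4) by auto
  next
    case False
    then have "logistic_weight (marg s j) * b j \<le> 0"
      using logistic_weight_pos[of "marg s j"] by (simp add: mult_nonneg_nonpos)
    then show ?thesis
      using delta_pos by auto
  qed
  then have "(\<Sum>j<n. logistic_weight (marg s j) * b j)
      \<le> (\<Sum>j<n. (if j = k then b k * logistic_weight (marg s k) else 0) + \<delta>)"
    by (rule sum_mono)
  also have "\<dots> = b k * logistic_weight (marg s k) + real n * \<delta>"
    using assms(3) by (simp add: sum.distrib)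
  finally have "eta / real n * (\<Sum>j<n. logistic_weight (marg s j) * b j)
      \<le> eta / real n * (b k * logistic_weight (marg s k) + real n * \<delta>)"
    using eta_pos by (intro mult_left_mono) auto
  also have "\<dots> = eta / real n * (b k * logistic_weight (marg s k)) + eta * \<delta>"
    using n_pos by (simp add: field_simps)
  finally show ?thesis
    by (simp add: perp_Suc)
qed

lemma perp_Suc_le_perp:
  assumes "1 \<le> s" "1 / (8 * eta) < loss s" "0 < perp s" "perp s \<le> eta"
  shows "perp (Suc s) \<le> perp s"
proof -
  obtain k where k: "k < n" "b k < 0" "u / 4 < - b k * perp s"
    and weight: "1 / (9 * eta) < logistic_weight (marg s k)"
    using exists_violator[OF assms(1-3)] by blast
  have "- b k * perp s \<le> - b k * eta"
    using k(2) assms(4) by (intro mult_left_mono) auto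
  then have "eta * (\<gamma>\<^sup>2 / 4) < eta * - b k"
    using k(3) by (simp add: u_def algebra_simps)
  then have "\<gamma>\<^sup>2 / 4 < - b k"
    using mult_less_cancel_left_pos[OF eta_pos] by blast
  then have "\<gamma>\<^sup>2 / 4 * (1 / (9 * eta)) \<le> - b k * logistic_weight (marg s k)"
    using eta_pos weight k(2) by (intro mult_mono) auto
  then have "eta / real n * (\<gamma>\<^sup>2 / 4 * (1 / (9 * eta)))
      \<le> eta / real n * (- b k * logistic_weight (marg s k))"
    using eta_pos by (intro mult_left_mono) auto
  moreover have "eta / real n * (\<gamma>\<^sup>2 / 4 * (1 / (9 * eta))) = \<gamma>\<^sup>2 / (36 * real n)"
    using eta_pos by simp
  moreover have "36 * (real n * (eta * \<delta>)) \<le> \<gamma>\<^sup>2"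
    using n_eta_delta_le gamma_sq_pos by linarith
  then have "eta * \<delta> \<le> \<gamma>\<^sup>2 / (36 * real n)"
    using n_pos by (simp add: field_simps)
  ultimately show ?thesis
    using perp_Suc_le[OF assms(1) _ k(1,2)] assms(3) by simp
qed

definition "all_marg_pos s \<longleftrightarrow> (\<forall>i<n. 0 < marg s i)"

section \<open>Phase 1: some margin is nonpositive\<close>

definition "drift = eta * \<gamma> / (2 * real n)"

lemma drift_nonneg: "0 \<le> drift"
  using eta_pos gamma_pos by (simp add: drift_def)

lemma par_Suc_ge_of_nonpos_marg:
  assumes "k < n" "marg s k \<le> 0"
  shows "par s + drift \<le> par (Suc s)"
proof -
  have "1 / 2 * \<gamma> \<le> logistic_weight (marg s k) * a k"
    using logistic_weight_ge_half[OF assms(2)] gamma_le_a[OF assms(1)] gamma_pos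
    by (intro mult_mono) auto
  also have "\<dots> \<le> (\<Sum>j<n. logistic_weight (marg s j) * a j)"
    using assms(1) logistic_weight_pos a_pos
    by (intro member_le_sum) (auto intro: mult_nonneg_nonneg less_imp_le)
  finally have "eta / real n * (1 / 2 * \<gamma>) \<le> eta / real n * (\<Sum>j<n. logistic_weight (marg s j) * a j)"
    using eta_pos by (intro mult_left_mono) auto
  then show ?thesis
    by (simp add: par_Suc drift_def)
qed

lemma par_gamma_le_of_nonpos_marg:
  assumes "1 \<le> s" "0 < perp s" "k < n" "marg s k \<le> 0"
  shows "par s * \<gamma> \<le> - b k * perp s" and "b k < 0"
proof -
  have "0 \<le> par s"
    using par_ge[OF assms(1)] mult_pos_pos[OF eta_pos gamma_pos] by linarith
  then have "par s * \<gamma> \<le> par s * a k"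
    using gamma_le_a[OF assms(3)] by (intro mult_left_mono)
  moreover have ak: "par s * a k \<le> - b k * perp s"
    using assms(4) marg_eq[of s k] mult.commute[of "b k" "perp s"] by linarith
  ultimately show "par s * \<gamma> \<le> - b k * perp s"
    by linarith
  have "perp s * b k < 0"
    using ak par_a_ge[OF assms(1,3)] u_pos mult.commute[of "b k" "perp s"] by linarith
  then show "b k < 0"
    using assms(2) by (simp add: mult_less_0_iff)
qed

lemma perp_decrement_bounds:
  assumes "1 \<le> s" "0 < perp s" "perp s \<le> eta" "k < n" "marg s k \<le> 0"
  defines "d \<equiv> eta / real n * (- b k * logistic_weight (marg s k))"
  shows "eta * \<delta> \<le> d" and "drift * par s \<le> d * perp s"
proof -
  note dom = par_gamma_le_of_nonpos_marg[OF assms(1,2,4,5)]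
  have w: "1 / 2 \<le> logistic_weight (marg s k)"
    using logistic_weight_ge_half[OF assms(5)] .
  have par: "eta * \<gamma> / 2 \<le> par s" "0 < eta * \<gamma> / 2"
    using par_ge[OF assms(1)] eta_pos gamma_pos by auto
  have "1 / 2 * (par s * \<gamma>) \<le> logistic_weight (marg s k) * (- b k * perp s)"
    using par gamma_pos logistic_weight_pos[of "marg s k"] by (intro mult_mono[OF w dom(1)]) auto
  then have "eta / real n * (1 / 2 * (par s * \<gamma>))
      \<le> eta / real n * (logistic_weight (marg s k) * (- b k * perp s))"
    using eta_pos by (intro mult_left_mono) auto
  then show "drift * par s \<le> d * perp s"
    by (simp add: d_def drift_def field_simps)
  have "- b k * perp s \<le> - b k * eta"
    using dom(2) assms(3) by (intro mult_left_mono) auto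
  moreover have "eta * \<gamma> / 2 * \<gamma> \<le> par s * \<gamma>"
    using par gamma_pos by (intro mult_right_mono) auto
  ultimately have "eta * (\<gamma>\<^sup>2 / 2) \<le> eta * - b k"
    using dom(1) by (simp add: power2_eq_square algebra_simps)
  then have "\<gamma>\<^sup>2 / 2 \<le> - b k"
    using mult_le_cancel_left_pos[OF eta_pos] by blast
  then have "\<gamma>\<^sup>2 / 2 * (1 / 2) \<le> - b k * logistic_weight (marg s k)"
    using w dom(2) by (intro mult_mono) auto
  then have "1 * (\<gamma>\<^sup>2 / 4) \<le> d"
    unfolding d_def using n_le_eta n_pos gamma_sq_pos by (intro mult_mono) (auto simp: field_simps)
  then show "eta * \<delta> \<le> d"
    using eta_delta_le gamma_sq_pos by linarith
qed

lemma perp_sq_Suc_le: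
  assumes "1 \<le> s" "0 < perp s" "perp s \<le> eta" "0 < perp (Suc s)" "k < n" "marg s k \<le> 0"
  shows "(perp (Suc s))\<^sup>2 \<le> (perp s)\<^sup>2 - drift * par s + eta\<^sup>2 * \<delta>"
proof -
  define d where "d = eta / real n * (- b k * logistic_weight (marg s k))"
  note bounds = perp_decrement_bounds[OF assms(1-3,5,6), folded d_def]
  define c where "c = d - eta * \<delta>"
  have c: "0 \<le> c" "perp (Suc s) \<le> perp s - c"
    using bounds(1) perp_Suc_le[OF assms(1) _ assms(5)] par_gamma_le_of_nonpos_marg(2)[OF assms(1,2,5,6)]
      assms(2) by (simp_all add: c_def d_def)
  then have "(perp (Suc s))\<^sup>2 \<le> (perp s - c)\<^sup>2"
    using assms(4) by (intro power_mono) auto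
  also have "\<dots> = (perp s)\<^sup>2 - perp s * c - c * (perp s - c)"
    by (simp add: power2_eq_square algebra_simps)
  also have "\<dots> \<le> (perp s)\<^sup>2 - perp s * c"
    using c assms(4) by (simp add: mult_nonneg_nonneg)
  finally have sq: "(perp (Suc s))\<^sup>2 \<le> (perp s)\<^sup>2 - perp s * c" .
  have "eta * \<delta> * perp s \<le> eta * \<delta> * eta"
    using assms(3) eta_pos delta_pos by (intro mult_left_mono) auto
  then have "eta * \<delta> * perp s \<le> eta\<^sup>2 * \<delta>"
    by (simp add: power2_eq_square mult_ac)
  moreover have "perp s * c = d * perp s - eta * \<delta> * perp s"
    by (simp add: c_def algebra_simps)
  ultimately show ?thesis
    using sq bounds(2) by linarith
qed

lemma phase1_invariant:
  assumes s0: "1 \<le> s0"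
    and not_pos: "\<forall>k<K. \<not> all_marg_pos (s0 + k)"
    and perp: "\<forall>k\<le>K. 0 < perp (s0 + k) \<and> perp (s0 + k) \<le> eta"
  shows "k \<le> K \<Longrightarrow> real k * drift \<le> par (s0 + k) \<and>
    (perp (s0 + k))\<^sup>2 \<le> eta\<^sup>2 - drift\<^sup>2 * (real k * (real k - 1) / 2) + real k * eta * (eta * \<delta>)"
proof (induction k)
  case 0
  have "0 \<le> par s0"
    using par_ge[OF s0] mult_pos_pos[OF eta_pos gamma_pos] by linarith
  moreover have "(perp s0)\<^sup>2 \<le> eta\<^sup>2"
    using perp by (intro power_mono) auto
  ultimately show ?case
    by simp
next
  case (Suc k)
  then have "\<not> all_marg_pos (s0 + k)"
    using not_pos by simp
  then obtain i where i: "i < n" "marg (s0 + k) i \<le> 0"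
    unfolding all_marg_pos_def by (auto simp: not_less)
  have IH: "real k * drift \<le> par (s0 + k)"
    "(perp (s0 + k))\<^sup>2 \<le> eta\<^sup>2 - drift\<^sup>2 * (real k * (real k - 1) / 2) + real k * eta * (eta * \<delta>)"
    using Suc by auto
  have "drift * (real k * drift) \<le> drift * par (s0 + k)"
    using IH(1) drift_nonneg by (rule mult_left_mono)
  moreover have "(perp (Suc (s0 + k)))\<^sup>2 \<le> (perp (s0 + k))\<^sup>2 - drift * par (s0 + k) + eta\<^sup>2 * \<delta>"
    using perp_sq_Suc_le[of "s0 + k" i] s0 perp Suc.prems i
    by (metis Suc_leD add_Suc_right le_add1 order.trans le_refl)
  moreover have "eta\<^sup>2 - drift\<^sup>2 * (real k * (real k - 1) / 2) + real k * eta * (eta * \<delta>)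
      - drift * (real k * drift) + eta\<^sup>2 * \<delta>
      = eta\<^sup>2 - drift\<^sup>2 * (real (Suc k) * (real (Suc k) - 1) / 2) + real (Suc k) * eta * (eta * \<delta>)"
    by (simp add: field_simps power2_eq_square)
  moreover have "par (s0 + k) + drift \<le> par (s0 + Suc k)"
    using par_Suc_ge_of_nonpos_marg[OF i] by simp
  ultimately show ?case
    using IH by (auto simp: algebra_simps)
qed

lemma phase1_length_bound:
  assumes "1 \<le> s0"
    and "\<forall>k<K. \<not> all_marg_pos (s0 + k)"
    and "\<forall>k\<le>K. 0 < perp (s0 + k) \<and> perp (s0 + k) \<le> eta"
  shows "real K < 2 + 3 * real n / \<gamma>"
proof -
  have "drift\<^sup>2 * (real K * (real K - 1) / 2) \<le> eta\<^sup>2 + real K * eta * (eta * \<delta>)"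
    using phase1_invariant[OF assms, of K] zero_le_power2[of "perp (s0 + K)"] by linarith
  then show ?thesis
    using n_pos eta_pos delta_pos unfolding drift_def
    by (intro triangular_budget_bound[OF one_le_eta gamma_pos gamma_le_1 _ _ n_eta_delta_le]) auto
qed

section \<open>Phase 2: all margins are positive\<close>

lemma gamma_sq_le_inner_x:
  assumes "i < n" "j < n" "b i \<le> 0" "b j \<le> 0"
  shows "\<gamma>\<^sup>2 \<le> x j \<bullet> x i"
proof -
  have "\<gamma> * \<gamma> \<le> a j * a i"
    using assms gamma_le_a gamma_pos a_pos by (intro mult_mono) (auto intro: less_imp_le)
  moreover have "0 \<le> b j * b i"
    using assms by (simp add: mult_nonpos_nonpos)
  ultimately show ?thesis
    by (simp add: inner_x_eq power2_eq_square)
qed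

lemma weighted_inner_x_ge:
  assumes "1 \<le> s" "0 < perp s" "i < n" "b i \<le> 0" "j < n"
  shows "- \<delta> \<le> logistic_weight (marg s j) * (x j \<bullet> x i)"
proof (cases "b j \<le> 0")
  case True
  then have "\<gamma>\<^sup>2 \<le> x j \<bullet> x i"
    using assms(3-5) by (intro gamma_sq_le_inner_x) auto
  then have "0 \<le> x j \<bullet> x i"
    using gamma_sq_pos by linarith
  then have "0 \<le> logistic_weight (marg s j) * (x j \<bullet> x i)"
    using logistic_weight_pos[of "marg s j"] by simp
  then show ?thesis
    using delta_pos by linarith
next
  case False
  have "logistic_weight (marg s j) * - 1 \<le> logistic_weight (marg s j) * (x j \<bullet> x i)"
    using assms(3,5) abs_inner_x_le_1[of j i] logistic_weight_pos[of "marg s j"]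
    by (intro mult_left_mono) auto
  moreover have "logistic_weight (marg s j) \<le> \<delta>"
    using False assms(1,2,5) by (intro weight_le_delta_of_same_side) auto
  ultimately show ?thesis
    by linarith
qed

lemma marg_Suc_gt:
  assumes "1 \<le> s" "1 / (8 * eta) < loss s" "0 < perp s" "i < n" "b i \<le> 0"
  shows "marg s i < marg (Suc s) i"
proof -
  obtain k where k: "k < n" "b k < 0" and weight: "1 / (9 * eta) < logistic_weight (marg s k)"
    using exists_violator[OF assms(1-3)] by blast
  have nonneg: "0 \<le> logistic_weight (marg s j) * (x j \<bullet> x i) + \<delta>" if "j \<in> {..<n}" for j
    using weighted_inner_x_ge[OF assms(1,3-5), of j] that by simp
  have "logistic_weight (marg s k) * (x k \<bullet> x i) + \<delta>
      \<le> (\<Sum>j<n. logistic_weight (marg s j) * (x j \<bullet> x i) + \<delta>)"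
    using k(1) nonneg by (intro member_le_sum) auto
  then have "logistic_weight (marg s k) * (x k \<bullet> x i) + \<delta>
      \<le> (\<Sum>j<n. logistic_weight (marg s j) * (x j \<bullet> x i)) + real n * \<delta>"
    by (simp add: sum.distrib)
  moreover have "logistic_weight (marg s k) * \<gamma>\<^sup>2 \<le> logistic_weight (marg s k) * (x k \<bullet> x i)"
    using k assms(4,5) logistic_weight_pos[of "marg s k"]
    by (intro mult_left_mono gamma_sq_le_inner_x) auto
  moreover have "1 / (9 * eta) * \<gamma>\<^sup>2 \<le> logistic_weight (marg s k) * \<gamma>\<^sup>2"
    using weight gamma_sq_pos by (intro mult_right_mono) auto
  moreover have "9 * (real n * (eta * \<delta>)) < \<gamma>\<^sup>2"
    using n_eta_delta_le gamma_sq_pos by linarith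
  then have "real n * \<delta> < 1 / (9 * eta) * \<gamma>\<^sup>2"
    using eta_pos by (simp add: field_simps)
  ultimately have "0 < (\<Sum>j<n. logistic_weight (marg s j) * (x j \<bullet> x i))"
    using delta_pos by linarith
  then show ?thesis
    using eta_pos n_pos by (simp add: marg_Suc)
qed

lemma all_marg_pos_Suc:
  assumes "1 \<le> s" "1 / (8 * eta) < loss s" "0 < perp s" "0 < perp (Suc s)" "all_marg_pos s"
  shows "all_marg_pos (Suc s)"
  unfolding all_marg_pos_def
proof (intro allI impI)
  fix i assume i: "i < n"
  show "0 < marg (Suc s) i"
  proof (cases "b i \<le> 0")
    case True
    then show ?thesis
      using marg_Suc_gt[OF assms(1-3) i True] assms(5) i by (force simp: all_marg_pos_def)
  next
    case False
    then show ?thesis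
      using marg_ge_of_same_side[of "Suc s" i] assms(1,4) i u_pos by force
  qed
qed

lemma loss_Suc_le:
  "loss (Suc s) \<le> loss s - eta / (real n)\<^sup>2 *
     (\<Sum>i<n. \<Sum>j<n. logistic_weight (marg (Suc s) i) * logistic_weight (marg s j) * (x j \<bullet> x i))"
proof -
  define W where "W i = (\<Sum>j<n. logistic_weight (marg (Suc s) i) * logistic_weight (marg s j) * (x j \<bullet> x i))" for i
  have "(marg (Suc s) i - marg s i) * logistic_weight (marg (Suc s) i) = eta / real n * W i" for i
    by (simp add: marg_Suc W_def sum_distrib_left sum_distrib_right mult_ac)
  then have "logistic_loss (marg (Suc s) i) \<le> logistic_loss (marg s i) - eta / real n * W i" for i
    using logistic_loss_tangent[of "marg (Suc s) i" "marg s i"] by simp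
  then have "(\<Sum>i<n. logistic_loss (marg (Suc s) i)) \<le> (\<Sum>i<n. logistic_loss (marg s i) - eta / real n * W i)"
    by (intro sum_mono)
  also have "\<dots> = (\<Sum>i<n. logistic_loss (marg s i)) - eta / real n * (\<Sum>i<n. W i)"
    by (simp add: sum_subtractf sum_distrib_left)
  finally have "(\<Sum>i<n. logistic_loss (marg (Suc s) i)) / real n
      \<le> ((\<Sum>i<n. logistic_loss (marg s i)) - eta / real n * (\<Sum>i<n. W i)) / real n"
    using n_pos by (intro divide_right_mono) auto
  then show ?thesis
    by (simp add: loss_eq W_def diff_divide_distrib power2_eq_square)
qed

definition "neg_weight s j = (if b j \<le> 0 then logistic_weight (marg s j) else 0)"

lemma cross_term_ge:
  assumes "1 \<le> s" "0 < perp s" "0 < perp (Suc s)" "i < n" "j < n"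
  shows "\<gamma>\<^sup>2 * (neg_weight (Suc s) i * neg_weight s j) - \<delta>
    \<le> logistic_weight (marg (Suc s) i) * logistic_weight (marg s j) * (x j \<bullet> x i)"
proof -
  let ?w' = "logistic_weight (marg (Suc s) i)" and ?w = "logistic_weight (marg s j)"
  have w: "0 < ?w'" "?w' \<le> 1" "0 < ?w" "?w \<le> 1"
    using logistic_weight_pos logistic_weight_le_1 by auto
  show ?thesis
  proof (cases "b i \<le> 0 \<and> b j \<le> 0")
    case True
    then have "?w' * ?w * \<gamma>\<^sup>2 \<le> ?w' * ?w * (x j \<bullet> x i)"
      using assms(4,5) w by (intro mult_left_mono gamma_sq_le_inner_x) auto
    then show ?thesis
      using True delta_pos by (simp add: neg_weight_def mult_ac)
  next
    case False
    have "?w' * ?w \<le> \<delta>"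
    proof (cases "b i \<le> 0")
      case True
      then have "?w \<le> \<delta>"
        using False assms by (intro weight_le_delta_of_same_side) auto
      then show ?thesis
        using w mult_mono[of ?w' 1 ?w \<delta>] by simp
    next
      case False
      then have "?w' \<le> \<delta>"
        using assms by (intro weight_le_delta_of_same_side) auto
      then show ?thesis
        using w mult_mono[of ?w' \<delta> ?w 1] delta_pos by simp
    qed
    moreover have "?w' * ?w * - 1 \<le> ?w' * ?w * (x j \<bullet> x i)"
      using w abs_inner_x_le_1[OF assms(5,4)] by (intro mult_left_mono) auto
    moreover have "\<gamma>\<^sup>2 * (neg_weight (Suc s) i * neg_weight s j) = 0"
      using False by (auto simp: neg_weight_def)
    ultimately show ?thesis
      by linarith
  qed
qed

lemma sum_neg_weight_ge:
  assumes "1 \<le> s" "0 \<le> perp s" "all_marg_pos s"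
  shows "real n * (loss s / 2 - \<delta>) \<le> (\<Sum>j<n. neg_weight s j)"
proof -
  have "logistic_loss (marg s j) / 2 - \<delta> \<le> neg_weight s j" if j: "j \<in> {..<n}" for j
  proof (cases "b j \<le> 0")
    case True
    have "0 < marg s j"
      using assms(3) j by (simp add: all_marg_pos_def)
    then have "exp (- marg s j) / 2 \<le> logistic_weight (marg s j)"
      by (intro logistic_weight_ge_half_exp) simp
    then show ?thesis
      using True delta_pos logistic_loss_le_exp[of "marg s j"] by (simp add: neg_weight_def)
  next
    case False
    then show ?thesis
      using j assms(1,2) loss_le_delta_of_same_side[of s j] delta_pos by (simp add: neg_weight_def)
  qed
  then have "(\<Sum>j<n. logistic_loss (marg s j) / 2 - \<delta>) \<le> (\<Sum>j<n. neg_weight s j)"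
    by (rule sum_mono)
  moreover have "(\<Sum>j<n. logistic_loss (marg s j) / 2 - \<delta>) = real n * (loss s / 2 - \<delta>)"
    using n_pos by (simp add: loss_eq sum_subtractf sum_divide_distrib[symmetric] field_simps)
  ultimately show ?thesis
    by simp
qed

lemma delta_le_half_loss: "1 / (8 * eta) < loss s \<Longrightarrow> \<delta> \<le> loss s / 2"
proof -
  assume "1 / (8 * eta) < loss s"
  moreover have "eta * \<delta> \<le> 1 / 16"
    using eta_delta_le gamma_sq_le_1 by linarith
  then have "\<delta> \<le> 1 / (16 * eta)"
    using eta_pos by (simp add: field_simps)
  ultimately show ?thesis
    by (simp add: field_simps)
qed

lemma inverse_loss_Suc_ge:
  assumes "1 \<le> s" "1 / (8 * eta) < loss s" "1 / (8 * eta) < loss (Suc s)"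
    and "0 < perp s" "0 < perp (Suc s)" "all_marg_pos s" "all_marg_pos (Suc s)"
  shows "1 / loss s + eta * \<gamma>\<^sup>2 / 5 \<le> 1 / loss (Suc s)"
proof -
  define W where "W = (\<Sum>i<n. \<Sum>j<n.
    logistic_weight (marg (Suc s) i) * logistic_weight (marg s j) * (x j \<bullet> x i))"
  define Q where "Q = (loss s / 2 - \<delta>) * (loss (Suc s) / 2 - \<delta>)"
  have "(\<Sum>i<n. \<Sum>j<n. \<gamma>\<^sup>2 * (neg_weight (Suc s) i * neg_weight s j) - \<delta>) \<le> W"
    unfolding W_def using cross_term_ge assms(1,4,5) by (intro sum_mono) auto
  moreover have "(\<Sum>i<n. \<Sum>j<n. \<gamma>\<^sup>2 * (neg_weight (Suc s) i * neg_weight s j) - \<delta>)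
      = \<gamma>\<^sup>2 * ((\<Sum>i<n. neg_weight (Suc s) i) * (\<Sum>j<n. neg_weight s j)) - real n * real n * \<delta>"
    unfolding sum_product by (simp add: sum_subtractf sum_distrib_left mult.assoc)
  ultimately have W: "\<gamma>\<^sup>2 * ((\<Sum>i<n. neg_weight (Suc s) i) * (\<Sum>j<n. neg_weight s j)) - real n * real n * \<delta> \<le> W"
    by simp
  have "real n * (loss (Suc s) / 2 - \<delta>) * (real n * (loss s / 2 - \<delta>))
      \<le> (\<Sum>i<n. neg_weight (Suc s) i) * (\<Sum>j<n. neg_weight s j)"
    using sum_neg_weight_ge[of "Suc s"] sum_neg_weight_ge[of s] assms
      delta_le_half_loss[OF assms(2)] delta_le_half_loss[OF assms(3)]
    by (intro mult_mono) (auto intro: order_trans[rotated])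
  then have "real n * real n * (\<gamma>\<^sup>2 * Q) \<le> \<gamma>\<^sup>2 * ((\<Sum>i<n. neg_weight (Suc s) i) * (\<Sum>j<n. neg_weight s j))"
    using mult_left_mono[OF _ less_imp_le[OF gamma_sq_pos]] by (fastforce simp: Q_def mult_ac)
  with W have "(real n)\<^sup>2 * (\<gamma>\<^sup>2 * Q - \<delta>) \<le> W"
    by (simp add: power2_eq_square algebra_simps)
  then have "\<gamma>\<^sup>2 * Q - \<delta> \<le> W / (real n)\<^sup>2"
    using n_pos by (simp add: field_simps)
  then have "eta * (\<gamma>\<^sup>2 * Q - \<delta>) \<le> eta / (real n)\<^sup>2 * W"
    using eta_pos mult_left_mono[of _ _ eta] by fastforce
  then have "loss (Suc s) \<le> loss s - eta * (\<gamma>\<^sup>2 * Q - \<delta>)"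
    using loss_Suc_le[of s] unfolding W_def by linarith
  then show ?thesis
    unfolding Q_def
    by (rule inverse_increase_of_quadratic_decrease[OF one_le_eta gamma_sq_pos gamma_sq_le_1
          delta_pos eta_sq_delta_le assms(2,3)])
qed

lemma phase2_length_bound:
  assumes s0: "1 \<le> s0" and pos0: "all_marg_pos s0"
    and run: "\<forall>k\<le>K. 1 / (8 * eta) < loss (s0 + k) \<and> 0 < perp (s0 + k)"
  shows "real K < 40 / \<gamma>\<^sup>2"
proof -
  have "all_marg_pos (s0 + k) \<and> 1 / loss s0 + real k * (eta * \<gamma>\<^sup>2 / 5) \<le> 1 / loss (s0 + k)"
    if "k \<le> K" for k
    using that
  proof (induction k)
    case (Suc k)
    then have hyps: "1 \<le> s0 + k" "1 / (8 * eta) < loss (s0 + k)" "1 / (8 * eta) < loss (Suc (s0 + k))"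
      "0 < perp (s0 + k)" "0 < perp (Suc (s0 + k))" "all_marg_pos (s0 + k)"
      using s0 run by (auto dest: spec[of _ k] spec[of _ "Suc k"])
    then have "all_marg_pos (Suc (s0 + k))"
      by (intro all_marg_pos_Suc) auto
    moreover have "1 / loss (s0 + k) + eta * \<gamma>\<^sup>2 / 5 \<le> 1 / loss (Suc (s0 + k))"
      using hyps calculation by (intro inverse_loss_Suc_ge) auto
    moreover have "1 / loss s0 + real k * (eta * \<gamma>\<^sup>2 / 5) \<le> 1 / loss (s0 + k)"
      using Suc by simp
    ultimately show ?case
      unfolding add_Suc_right of_nat_Suc distrib_right mult_1_left by linarith
  qed (simp add: pos0)
  then have growth: "1 / loss s0 + real K * (eta * \<gamma>\<^sup>2 / 5) \<le> 1 / loss (s0 + K)"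
    by blast
  have "0 < 1 / (8 * eta)" "1 / (8 * eta) < loss s0" "1 / (8 * eta) < loss (s0 + K)"
    using run eta_pos by (auto dest: spec[of _ 0] spec[of _ K])
  then have "0 < loss s0" "0 < loss (s0 + K)" "1 / (8 * eta) < loss (s0 + K)"
    by linarith+
  then have "0 < 1 / loss s0" "1 / loss (s0 + K) < 8 * eta"
    using eta_pos by (simp_all add: field_simps)
  with growth have "real K * (eta * \<gamma>\<^sup>2 / 5) < 8 * eta"
    by linarith
  then have "eta * (real K * \<gamma>\<^sup>2) < eta * 40"
    by (simp add: field_simps)
  then have "real K * \<gamma>\<^sup>2 < 40"
    using mult_less_cancel_left_pos[OF eta_pos] by blast
  then show ?thesis
    using gamma_sq_pos by (simp add: field_simps)
qed

lemma positive_run_length_bound: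
  assumes s0: "1 \<le> s0"
    and run: "\<forall>k\<le>K. 1 / (8 * eta) < loss (s0 + k) \<and> 0 < perp (s0 + k) \<and> perp (s0 + k) \<le> eta"
  shows "real K < 2 + 3 * real n / \<gamma> + 40 / \<gamma>\<^sup>2"
proof -
  define K1 where "K1 = (LEAST k. k = K \<or> all_marg_pos (s0 + k))"
  have K1: "K1 \<le> K" "K1 = K \<or> all_marg_pos (s0 + K1)"
    unfolding K1_def by (rule Least_le, simp) (rule LeastI[of _ K], simp)
  have "\<not> all_marg_pos (s0 + k)" if "k < K1" for k
    using not_less_Least[OF that[unfolded K1_def]] that K1(1) by auto
  then have "real K1 < 2 + 3 * real n / \<gamma>"
    using s0 run K1(1) by (intro phase1_length_bound) auto
  moreover have "real (K - K1) < 40 / \<gamma>\<^sup>2"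
  proof (cases "all_marg_pos (s0 + K1)")
    case True
    then show ?thesis
      using s0 run K1(1) by (intro phase2_length_bound[of "s0 + K1"]) (auto simp: add.assoc)
  next
    case False
    then show ?thesis
      using K1(2) gamma_sq_pos by simp
  qed
  ultimately show ?thesis
    using K1(1) by (simp add: of_nat_diff)
qed

section \<open>Sign changes of perp before tau\<close>

(* Replacing v_* by - v_* negates perp and changes nothing else: this reduces negative perp to positive. *)
lemma flip_vs: "separable_logistic_gd n x eta ws (- vs)"
  using n_pos bounded separable ws_unit ws_max vs_unit vs_orth eta_pos eta_ge
  by unfold_locales auto

lemma loss_gt_before_tau:
  assumes "enat s < tau n x eta"
  shows "1 / (8 * eta) < loss s"
proof (cases "\<exists>t. logloss n x (gd n x eta t) \<le> 1 / (8 * eta)")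
  case True
  then have "s < (LEAST t. logloss n x (gd n x eta t) \<le> 1 / (8 * eta))"
    using assms by (simp add: tau_def)
  then have "\<not> logloss n x (gd n x eta s) \<le> 1 / (8 * eta)"
    by (rule not_less_Least)
  then show ?thesis
    by (simp add: loss_def)
next
  case False
  then show ?thesis
    by (simp add: loss_def not_le)
qed

lemma abs_perp_Suc_le:
  assumes "1 / (8 * eta) < loss s" "\<bar>perp s\<bar> \<le> eta"
  shows "\<bar>perp (Suc s)\<bar> \<le> eta"
proof -
  interpret N: separable_logistic_gd n x eta ws "- vs"
    by (rule flip_vs)
  have N: "N.perp m = - perp m" "N.loss m = loss m" for m
    by (simp_all add: N.perp_def perp_def N.loss_def loss_def)
  have "1 \<le> s" if "perp s \<noteq> 0"
    using that by (cases s) (auto simp: perp_def)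
  moreover consider "perp s = 0" | "0 < perp s" | "perp s < 0"
    by linarith
  ultimately show ?thesis
    using perp_Suc_ge[of s] N.perp_Suc_ge[of s] perp_Suc_le_perp[of s] N.perp_Suc_le_perp[of s]
      assms N by fastforce
qed

lemma abs_perp_le_eta: "enat s < tau n x eta \<Longrightarrow> \<bar>perp s\<bar> \<le> eta"
proof (induction s)
  case (Suc s)
  then have "enat s < tau n x eta"
    by (meson Suc_ile_eq less_imp_le)
  with Suc.IH show ?case
    by (intro abs_perp_Suc_le loss_gt_before_tau) auto
qed (use eta_pos in \<open>simp add: perp_def\<close>)

lemma perp_same_sign_of_not_oscillation:
  assumes "1 \<le> s" "1 / (8 * eta) < loss s" "1 / (8 * eta) < loss (Suc s)"
    and "\<not> oscillation n x eta ws vs s"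
  shows "0 < perp (Suc s) * perp s"
proof -
  have "lam \<gamma> eta \<le> par s"
    using lam_le par_ge[OF assms(1)] mult_pos_pos[OF eta_pos gamma_pos] by linarith
  then have "\<not> perp (Suc s) * perp s < 0"
    using assms(2-4) unfolding oscillation_def by (simp add: par_def perp_def loss_def \<gamma>_def)
  moreover have "perp (Suc s) * perp s \<noteq> 0"
    using perp_nonzero assms(1-3) by simp
  ultimately show ?thesis
    by linarith
qed

lemma same_sign_run_length_bound:
  assumes s0: "1 \<le> s0" "perp s0 \<noteq> 0"
    and run: "\<forall>k\<le>K. 1 / (8 * eta) < loss (s0 + k) \<and> \<bar>perp (s0 + k)\<bar> \<le> eta"
    and same_sign: "\<forall>k<K. 0 < perp (s0 + Suc k) * perp (s0 + k)"
  shows "real K < 2 + 3 * real n / \<gamma> + 40 / \<gamma>\<^sup>2"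
proof (cases "0 < perp s0")
  case True
  then have "\<forall>k\<le>K. 0 < perp (s0 + k)"
    using pos_of_pos_products[of perp s0 K] same_sign by blast
  then show ?thesis
    using run by (intro positive_run_length_bound[OF s0(1)]) auto
next
  case False
  interpret N: separable_logistic_gd n x eta ws "- vs"
    by (rule flip_vs)
  have N: "N.perp m = - perp m" "N.loss m = loss m" "N.\<gamma> = \<gamma>" for m
    by (simp_all add: N.perp_def perp_def N.loss_def loss_def N.\<gamma>_def \<gamma>_def)
  have "0 < N.perp s0"
    using False s0(2) N by simp
  then have "\<forall>k\<le>K. 0 < N.perp (s0 + k)"
    using pos_of_pos_products[of N.perp s0 K] same_sign N by simp
  then have "\<forall>k\<le>K. 1 / (8 * eta) < N.loss (s0 + k) \<and> 0 < N.perp (s0 + k) \<and> N.perp (s0 + k) \<le> eta"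
    using run N by (auto simp: abs_le_iff)
  then show ?thesis
    using N.positive_run_length_bound[OF s0(1)] N(3) by simp
qed

lemma tau_or_oscillation_within:
  assumes "enat t < tau n x eta"
  shows "\<exists>s. t \<le> s \<and> real s \<le> real t + 1 + 4 * real n / \<gamma> + 96 / \<gamma>\<^sup>2 \<and>
           (enat s = tau n x eta \<or> oscillation n x eta ws vs s)"
proof (rule ccontr)
  assume none: "\<not> ?thesis"
  define B where "B = 4 * real n / \<gamma> + 96 / \<gamma>\<^sup>2"
  define K where "K = nat \<lfloor>B\<rfloor>"
  have "0 \<le> real n / \<gamma>" "56 \<le> 56 / \<gamma>\<^sup>2"
    using gamma_pos gamma_sq_le_1 by (simp_all add: field_simps)
  moreover have "B = 3 * real n / \<gamma> + 40 / \<gamma>\<^sup>2 + (real n / \<gamma> + 56 / \<gamma>\<^sup>2)"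
    by (simp add: B_def field_simps)
  ultimately have B: "3 * real n / \<gamma> + 40 / \<gamma>\<^sup>2 + 56 \<le> B"
    by linarith
  have "0 \<le> B"
    using gamma_pos by (simp add: B_def)
  then have K: "B - 1 \<le> real K" "real K \<le> B"
    using of_int_floor_le[of B] real_of_int_floor_ge_diff_one[of B] by (simp_all add: K_def)
  have quiet: "enat s \<noteq> tau n x eta \<and> \<not> oscillation n x eta ws vs s" if "t \<le> s" "s \<le> Suc t + K" for s
    using none that K(2) by (force simp: B_def)
  have "enat s < tau n x eta" if "t \<le> s" "s \<le> Suc t + K" for s
    using enat_less_until[OF that(1) assms] quiet that(2) by auto
  then have run: "\<forall>k\<le>K. 1 / (8 * eta) < loss (Suc t + k) \<and> \<bar>perp (Suc t + k)\<bar> \<le> eta"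
    using loss_gt_before_tau abs_perp_le_eta by auto
  then have "\<forall>k<K. 0 < perp (Suc t + Suc k) * perp (Suc t + k)"
    using quiet run[rule_format, of "Suc _"] by (auto intro!: perp_same_sign_of_not_oscillation)
  moreover have "perp (Suc t) \<noteq> 0"
    using perp_nonzero run[rule_format, of 0] by simp
  ultimately have "real K < 2 + 3 * real n / \<gamma> + 40 / \<gamma>\<^sup>2"
    using same_sign_run_length_bound[of "Suc t"] run by simp
  with B K show False
    by linarith
qed

end

theorem lemma7:
  fixes n :: nat and x :: "nat \<Rightarrow> real^2" and eta :: real
    and ws vs :: "real^2" and t :: nat
  assumes n_pos: "n \<ge> 1"
    and bounded: "\<forall>i<n. norm (x i) \<le> 1"
    and separable: "\<exists>w. \<forall>i<n. w \<bullet> x i > 0"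
    and ws_unit: "norm ws = 1"
    and ws_max: "margin n x ws = max_margin n x"
    and vs_unit: "norm vs = 1"
    and vs_orth: "vs \<bullet> ws = 0"
    and eta_pos: "eta > 0"
    and eta_ge: "eta \<ge> eta0 n (max_margin n x)"
    and t_lt: "enat t < tau n x eta"
  shows "\<exists>s::nat. t \<le> s \<and>
           real s \<le> real t + 1 + 4 * real n / max_margin n x + 96 / (max_margin n x)\<^sup>2 \<and>
           (enat s = tau n x eta \<or> oscillation n x eta ws vs s)"
proof -
  interpret separable_logistic_gd n x eta ws vs
    using assms by unfold_locales
  show ?thesis
    using tau_or_oscillation_within[OF t_lt] by (simp add: \<gamma>_def)
qed

end
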